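(* The class of chain graphs is degree sandwich monotone; that is, for every chain graph $G$ and every set $F\subseteq E(G)$ such that $G-F$ is a chain graph, every degree-minimal edge $e$ in $F$ satisfies that $G-e$ is a chain graph.
   Context: A chain graph is a bipartite graph whose vertex set can be partitioned into two independent sets $X,Y$ such that the neighborhoods of the vertices of $X$ are linearly ordered by inclusion. Given a graph $G$ and $F\subseteq E(G)$, an edge $e\in F$ is degree-minimal in $F$ if its endpoints can be named $u,v$ so that (i) $u$ has the smallest degree in $G$ among all vertices incident to an edge of $F$, and (ii) $v$ has the smallest degree in $G$ among all vertices $w$ with $uw\in F$. *)

theory Defs
  imports Main
begin

definition graph :: "'a set \<Rightarrow> 'a set set \<Rightarrow> bool" where
  "graph V E \<longleftrightarrow> finite V \<and> (\<forall>e\<in>E. e \<subseteq> V \<and> card e = 2)"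

definition nbhd :: "'a set set \<Rightarrow> 'a \<Rightarrow> 'a set" where
  "nbhd E v = {w. {v, w} \<in> E}"

definition degree :: "'a set set \<Rightarrow> 'a \<Rightarrow> nat" where
  "degree E v = card (nbhd E v)"

definition independent :: "'a set set \<Rightarrow> 'a set \<Rightarrow> bool" where
  "independent E S \<longleftrightarrow> (\<forall>e\<in>E. \<not> e \<subseteq> S)"

definition chain_graph :: "'a set \<Rightarrow> 'a set set \<Rightarrow> bool" where
  "chain_graph V E \<longleftrightarrow> graph V E \<and>
     (\<exists>X Y. X \<union> Y = V \<and> X \<inter> Y = {} \<and> independent E X \<and> independent E Y \<and>
        (\<forall>x1\<in>X. \<forall>x2\<in>X. nbhd E x1 \<subseteq> nbhd E x2 \<or> nbhd E x2 \<subseteq> nbhd E x1))"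

definition degree_minimal :: "'a set set \<Rightarrow> 'a set set \<Rightarrow> 'a set \<Rightarrow> bool" where
  "degree_minimal E F e \<longleftrightarrow> e \<in> F \<and>
     (\<exists>u v. e = {u, v} \<and>
        (\<forall>f\<in>F. \<forall>w\<in>f. degree E u \<le> degree E w) \<and>
        (\<forall>w. {u, w} \<in> F \<longrightarrow> degree E v \<le> degree E w))"

end

theory Submission
  imports Defs
begin

text \<open>
  For a bipartite graph, having the neighbourhoods of one side nested is the same as having no
  induced \<open>2K\<^sub>2\<close>. Deleting an edge \<open>e\<close> keeps the bipartition, so if \<open>G - e\<close> is not a chain graph
  then \<open>e\<close> is the middle edge \<open>bc\<close> of an induced path \<open>a-b-c-d\<close> of \<open>G\<close>. In a chain graph the
  ends of an induced \<open>P\<^sub>4\<close> satisfy \<open>N(a) \<subset> N(c)\<close> and \<open>N(d) \<subset> N(b)\<close>, hence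
  \<open>deg a < deg c\<close> and \<open>deg d < deg b\<close>. As \<open>G - F\<close> is a chain graph and \<open>bc \<in> F\<close>, one of
  \<open>ab\<close>, \<open>cd\<close> lies in \<open>F\<close> as well, and the corresponding strict inequality contradicts the
  degree-minimality of \<open>bc\<close> in \<open>F\<close>.
\<close>

definition bipartition :: "'a set \<Rightarrow> 'a set set \<Rightarrow> 'a set \<Rightarrow> 'a set \<Rightarrow> bool" where
  "bipartition V E X Y \<longleftrightarrow> X \<union> Y = V \<and> X \<inter> Y = {} \<and> independent E X \<and> independent E Y"

definition induced_2K2 :: "'a set set \<Rightarrow> 'a \<Rightarrow> 'a \<Rightarrow> 'a \<Rightarrow> 'a \<Rightarrow> bool" where
  "induced_2K2 E a b c d \<longleftrightarrow>
     {a, b} \<in> E \<and> {c, d} \<in> E \<and> {a, c} \<notin> E \<and> {a, d} \<notin> E \<and> {b, c} \<notin> E \<and> {b, d} \<notin> E"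

definition induced_P4 :: "'a set set \<Rightarrow> 'a \<Rightarrow> 'a \<Rightarrow> 'a \<Rightarrow> 'a \<Rightarrow> bool" where
  "induced_P4 E a b c d \<longleftrightarrow>
     {a, b} \<in> E \<and> {b, c} \<in> E \<and> {c, d} \<in> E \<and> {a, c} \<notin> E \<and> {a, d} \<notin> E \<and> {b, d} \<notin> E"

lemma in_nbhd_iff [simp]: "w \<in> nbhd E v \<longleftrightarrow> {v, w} \<in> E"
  by (simp add: nbhd_def)

lemma induced_2K2_swap:
  assumes "induced_2K2 E a b c d"
  shows "induced_2K2 E b a c d" "induced_2K2 E a b d c"
  using assms by (simp_all add: induced_2K2_def insert_commute)

lemma induced_P4_rev: "induced_P4 E a b c d \<Longrightarrow> induced_P4 E d c b a"
  by (simp add: induced_P4_def insert_commute)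

lemma graph_mono: "graph V E \<Longrightarrow> E' \<subseteq> E \<Longrightarrow> graph V E'"
  unfolding graph_def by blast

lemma independent_mono: "independent E S \<Longrightarrow> E' \<subseteq> E \<Longrightarrow> independent E' S"
  unfolding independent_def by blast

lemma bipartition_mono: "bipartition V E X Y \<Longrightarrow> E' \<subseteq> E \<Longrightarrow> bipartition V E' X Y"
  unfolding bipartition_def using independent_mono by metis

lemma graph_edge_subset: "graph V E \<Longrightarrow> e \<in> E \<Longrightarrow> e \<subseteq> V"
  by (simp add: graph_def)

lemma graph_edge_card: "graph V E \<Longrightarrow> e \<in> E \<Longrightarrow> card e = 2"
  by (simp add: graph_def)

lemma finite_nbhd:
  assumes "graph V E"
  shows "finite (nbhd E v)"
proof (rule finite_subset)
  show "nbhd E v \<subseteq> V"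
  proof
    fix w
    assume "w \<in> nbhd E v"
    then have "{v, w} \<in> E" by simp
    then have "{v, w} \<subseteq> V" by (rule graph_edge_subset[OF assms])
    then show "w \<in> V" by simp
  qed
  show "finite V"
    using assms by (simp add: graph_def)
qed

lemma independent_no_edge:
  assumes "independent E S" "x \<in> S" "y \<in> S"
  shows "{x, y} \<notin> E"
proof
  assume "{x, y} \<in> E"
  moreover have "{x, y} \<subseteq> S"
    using assms(2,3) by simp
  ultimately show False
    using assms(1) unfolding independent_def by blast
qed

lemma edge_crosses_bipartition:
  assumes "graph V E" "bipartition V E X Y" "{x, y} \<in> E"
  shows "x \<in> X \<longleftrightarrow> y \<in> Y" "x \<in> X \<longleftrightarrow> y \<notin> X"
proof -
  have XY: "X \<union> Y = V" "X \<inter> Y = {}" and indep: "independent E X" "independent E Y"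
    using assms(2) by (simp_all add: bipartition_def)
  have "x \<in> V" "y \<in> V"
    using graph_edge_subset[OF assms(1,3)] by simp_all
  moreover have "\<not> {x, y} \<subseteq> X" "\<not> {x, y} \<subseteq> Y"
    using indep assms(3) unfolding independent_def by blast+
  ultimately show "x \<in> X \<longleftrightarrow> y \<in> Y" "x \<in> X \<longleftrightarrow> y \<notin> X"
    using XY by auto
qed

lemma chain_graphE:
  assumes "chain_graph V E"
  obtains X Y where "graph V E" "bipartition V E X Y"
    "\<forall>x1\<in>X. \<forall>x2\<in>X. nbhd E x1 \<subseteq> nbhd E x2 \<or> nbhd E x2 \<subseteq> nbhd E x1"
  using assms unfolding chain_graph_def bipartition_def by blast

lemma chain_graphI:
  assumes "graph V E" "bipartition V E X Y"
    and "\<And>x1 x2. x1 \<in> X \<Longrightarrow> x2 \<in> X \<Longrightarrow> nbhd E x1 \<subseteq> nbhd E x2 \<or> nbhd E x2 \<subseteq> nbhd E x1"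
  shows "chain_graph V E"
  using assms(1,3) assms(2)[unfolded bipartition_def] unfolding chain_graph_def by blast

lemma chain_graph_no_induced_2K2:
  assumes "chain_graph V E"
  shows "\<not> induced_2K2 E a b c d"
proof
  assume K: "induced_2K2 E a b c d"
  obtain X Y where g: "graph V E" and bip: "bipartition V E X Y"
    and nested: "\<forall>x1\<in>X. \<forall>x2\<in>X. nbhd E x1 \<subseteq> nbhd E x2 \<or> nbhd E x2 \<subseteq> nbhd E x1"
    using chain_graphE[OF assms] by blast
  have no_K_from_X: False if "induced_2K2 E a' b' c' d'" "a' \<in> X" "c' \<in> X" for a' b' c' d'
  proof -
    have "b' \<in> nbhd E a' - nbhd E c'" "d' \<in> nbhd E c' - nbhd E a'"
      using that(1) unfolding induced_2K2_def by (simp_all add: insert_commute)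
    with nested that(2,3) show False by blast
  qed
  have ab: "{a, b} \<in> E" and cd: "{c, d} \<in> E"
    using K unfolding induced_2K2_def by blast+
  have "a \<in> X \<or> b \<in> X" "c \<in> X \<or> d \<in> X"
    using edge_crosses_bipartition(2)[OF g bip ab] edge_crosses_bipartition(2)[OF g bip cd]
    by blast+
  then show False
    using no_K_from_X[OF K] no_K_from_X[OF induced_2K2_swap(1)[OF K]]
      no_K_from_X[OF induced_2K2_swap(2)[OF K]]
      no_K_from_X[OF induced_2K2_swap(1)[OF induced_2K2_swap(2)[OF K]]]
    by blast
qed

lemma chain_graph_if_no_induced_2K2:
  assumes g: "graph V E" and bip: "bipartition V E X Y"
    and no_K: "\<And>a b c d. \<not> induced_2K2 E a b c d"
  shows "chain_graph V E"
proof -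
  have indep: "independent E X" "independent E Y"
    using bip by (simp_all add: bipartition_def)
  have "nbhd E x1 \<subseteq> nbhd E x2 \<or> nbhd E x2 \<subseteq> nbhd E x1" if x: "x1 \<in> X" "x2 \<in> X" for x1 x2
  proof (rule ccontr)
    assume "\<not> ?thesis"
    then obtain y1 y2 where "y1 \<in> nbhd E x1 - nbhd E x2" "y2 \<in> nbhd E x2 - nbhd E x1"
      by blast
    then have y: "{x1, y1} \<in> E" "{x2, y1} \<notin> E" "{x2, y2} \<in> E" "{x1, y2} \<notin> E"
      by simp_all
    have "y1 \<in> Y" "y2 \<in> Y"
      using x edge_crosses_bipartition(1)[OF g bip y(1)] edge_crosses_bipartition(1)[OF g bip y(3)]
      by blast+
    then have "{x1, x2} \<notin> E" "{y1, y2} \<notin> E"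
      using independent_no_edge[OF indep(1) x] independent_no_edge[OF indep(2)] by blast+
    moreover have "{y1, x2} \<notin> E"
      using y(2) by (simp add: insert_commute)
    ultimately have "induced_2K2 E x1 y1 x2 y2"
      using y unfolding induced_2K2_def by blast
    with no_K show False by blast
  qed
  with g bip show ?thesis
    by (rule chain_graphI)
qed

lemma induced_2K2_distinct:
  assumes "graph V E" "induced_2K2 E a b c d"
  shows "distinct [a, b, c, d]"
proof -
  have "card {a, b} = 2" "card {c, d} = 2"
    using assms(2) graph_edge_card[OF assms(1)] unfolding induced_2K2_def by simp_all
  then have "a \<noteq> b" "c \<noteq> d" by auto
  moreover have "a \<noteq> c" "a \<noteq> d" "b \<noteq> c" "b \<noteq> d"
    using assms(2) unfolding induced_2K2_def by (auto simp: insert_commute)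
  ultimately show ?thesis by simp
qed

lemma chain_graph_induced_P4_degree_less:
  assumes G: "chain_graph V E" and P: "induced_P4 E a b c d"
  shows "degree E a < degree E c"
proof -
  obtain X Y where g: "graph V E" and bip: "bipartition V E X Y"
    using chain_graphE[OF G] by metis
  have ab: "{a, b} \<in> E" and bc: "{b, c} \<in> E" and cd: "{c, d} \<in> E"
    and ac: "{a, c} \<notin> E" and ad: "{a, d} \<notin> E"
    using P unfolding induced_P4_def by blast+
  have "nbhd E a \<subseteq> nbhd E c"
  proof
    fix w
    assume "w \<in> nbhd E a"
    then have aw: "{a, w} \<in> E" by simp
    have "{w, d} \<notin> E"
      \<comment> \<open>\<open>w\<close>, \<open>b\<close> and \<open>d\<close> lie on the same side of the bipartition.\<close>
    proof
      assume "{w, d} \<in> E"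
      then show False
        using edge_crosses_bipartition(2)[OF g bip aw] edge_crosses_bipartition(2)[OF g bip ab]
          edge_crosses_bipartition(2)[OF g bip bc] edge_crosses_bipartition(2)[OF g bip cd]
          edge_crosses_bipartition(2)[OF g bip \<open>{w, d} \<in> E\<close>]
        by blast
    qed
    with aw cd ac ad chain_graph_no_induced_2K2[OF G, of a w c d] have "{w, c} \<in> E"
      unfolding induced_2K2_def by simp
    then show "w \<in> nbhd E c" by (simp add: insert_commute)
  qed
  moreover have "d \<in> nbhd E c" "d \<notin> nbhd E a"
    using cd ad by simp_all
  ultimately have "nbhd E a \<subset> nbhd E c" by blast
  then show ?thesis
    unfolding degree_def by (rule psubset_card_mono[OF finite_nbhd[OF g]])
qed

lemma induced_P4_outer_edge_deleted:
  assumes "chain_graph V (E - F)" "induced_P4 E a b c d" "{b, c} \<in> F"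
  shows "{a, b} \<in> F \<or> {c, d} \<in> F"
proof (rule ccontr)
  assume "\<not> ?thesis"
  with assms(2,3) have "induced_2K2 (E - F) a b c d"
    unfolding induced_P4_def induced_2K2_def by simp
  with chain_graph_no_induced_2K2[OF assms(1)] show False by simp
qed

lemma induced_P4_middle_edge_not_degree_minimal:
  assumes G: "chain_graph V E" and GF: "chain_graph V (E - F)"
    and P: "induced_P4 E a b c d" and bc: "{b, c} \<in> F"
    and min_b: "\<forall>f\<in>F. \<forall>w\<in>f. degree E b \<le> degree E w"
    and min_c: "\<forall>w. {b, w} \<in> F \<longrightarrow> degree E c \<le> degree E w"
  shows False
  using induced_P4_outer_edge_deleted[OF GF P bc]
proof
  assume "{a, b} \<in> F"
  then have "degree E c \<le> degree E a"
    using min_c by (simp add: insert_commute)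
  with chain_graph_induced_P4_degree_less[OF G P] show False by simp
next
  assume "{c, d} \<in> F"
  then have "degree E b \<le> degree E d"
    using min_b by simp
  with chain_graph_induced_P4_degree_less[OF G induced_P4_rev[OF P]] show False by simp
qed

lemma degree_minimal_not_middle_of_induced_P4:
  assumes G: "chain_graph V E" and GF: "chain_graph V (E - F)"
    and min: "degree_minimal E F {b, c}" and P: "induced_P4 E a b c d"
  shows False
proof -
  obtain u v where uv: "{b, c} = {u, v}" and bc: "{b, c} \<in> F"
    and min_u: "\<forall>f\<in>F. \<forall>w\<in>f. degree E u \<le> degree E w"
    and min_v: "\<forall>w. {u, w} \<in> F \<longrightarrow> degree E v \<le> degree E w"
    using min unfolding degree_minimal_def by metis
  from uv consider "u = b" "v = c" | "u = c" "v = b"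
    by (auto simp: doubleton_eq_iff)
  then show False
  proof cases
    case 1
    with induced_P4_middle_edge_not_degree_minimal[OF G GF P bc] min_u min_v show False
      by simp
  next
    case 2
    from bc have "{c, b} \<in> F" by (simp add: insert_commute)
    with induced_P4_middle_edge_not_degree_minimal[OF G GF induced_P4_rev[OF P]] 2 min_u min_v
    show False by simp
  qed
qed

lemma induced_2K2_delete_edge:
  assumes g: "graph V E" and K: "induced_2K2 (E - {e}) a b c d" and not_K: "\<not> induced_2K2 E a b c d"
  obtains a' b' c' d' where "induced_P4 E a' b' c' d'" "e = {b', c'}"
proof -
  have ab: "{a, b} \<in> E" "{b, a} \<in> E" and cd: "{c, d} \<in> E" "{d, c} \<in> E"
    using K unfolding induced_2K2_def by (simp_all add: insert_commute)
  have only_e: "{a, c} \<in> E \<Longrightarrow> {a, c} = e" "{a, d} \<in> E \<Longrightarrow> {a, d} = e"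
    "{b, c} \<in> E \<Longrightarrow> {b, c} = e" "{b, d} \<in> E \<Longrightarrow> {b, d} = e"
    using K unfolding induced_2K2_def by blast+
  have "distinct [a, b, c, d]"
    using induced_2K2_distinct[OF graph_mono[OF g] K] by blast
  then have ne: "{b, c} \<noteq> {a, c}" "{b, c} \<noteq> {a, d}" "{b, c} \<noteq> {b, d}"
    "{a, c} \<noteq> {a, d}" "{a, c} \<noteq> {b, d}" "{a, d} \<noteq> {b, d}"
    by (auto simp: doubleton_eq_iff)
  from not_K ab(1) cd(1) consider "{b, c} \<in> E" | "{a, c} \<in> E" | "{a, d} \<in> E" | "{b, d} \<in> E"
    unfolding induced_2K2_def by blast
  then show ?thesis
  proof cases
    case 1
    then have "induced_P4 E a b c d"
      using ab cd only_e ne unfolding induced_P4_def by metis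
    with that only_e(3)[OF 1] show ?thesis by simp
  next
    case 2
    then have "induced_P4 E b a c d"
      using ab cd only_e ne unfolding induced_P4_def by metis
    with that only_e(1)[OF 2] show ?thesis by simp
  next
    case 3
    then have "induced_P4 E b a d c"
      using ab cd only_e ne unfolding induced_P4_def by metis
    with that only_e(2)[OF 3] show ?thesis by simp
  next
    case 4
    then have "induced_P4 E a b d c"
      using ab cd only_e ne unfolding induced_P4_def by metis
    with that only_e(4)[OF 4] show ?thesis by simp
  qed
qed

theorem theorem4p9:
  fixes V :: "'a set" and E F :: "'a set set" and e :: "'a set"
  assumes "chain_graph V E"
    and "F \<subseteq> E"
    and "chain_graph V (E - F)"
    and "degree_minimal E F e"
  shows "chain_graph V (E - {e})"
proof -
  obtain X Y where g: "graph V E" and bip: "bipartition V E X Y"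
    using chain_graphE[OF assms(1)] by metis
  have "\<not> induced_2K2 (E - {e}) a b c d" for a b c d
  proof
    assume "induced_2K2 (E - {e}) a b c d"
    then obtain a' b' c' d' where "induced_P4 E a' b' c' d'" "e = {b', c'}"
      using induced_2K2_delete_edge[OF g] chain_graph_no_induced_2K2[OF assms(1)] by blast
    with degree_minimal_not_middle_of_induced_P4[OF assms(1,3)] assms(4) show False
      by blast
  qed
  then show ?thesis
    by (rule chain_graph_if_no_induced_2K2[OF graph_mono[OF g Diff_subset]
          bipartition_mono[OF bip Diff_subset]])
qed

end
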